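(* Let $\mathcal{H}$ be a supersolvable arrangement of rank $n\ge 3$ with decomposition $\mathcal{H}=\mathcal{H}_0\sqcup\mathcal{H}_1$ as in the definition of supersolvability, and let $\rho:\mathcal{R}(\mathcal{H})\to\mathcal{R}(\mathcal{H}_0)$ map every region of $\mathcal{H}$ to the region of $\mathcal{H}_0$ containing it. Then: (i) for any $R\in\mathcal{R}(\mathcal{H}_0)$, the subgraph of $G(\mathcal{H})$ induced by $\rho^{-1}(R)$ is a path of length $|\mathcal{H}_1|$; (ii) if $R,R'\in\mathcal{R}(\mathcal{H}_0)$ are adjacent in $G(\mathcal{H}_0)$, then, writing $\ell=|\mathcal{H}_1|$, the two paths $\rho^{-1}(R)$ and $\rho^{-1}(R')$ can be enumerated along the paths as $A_0,\dots,A_\ell$ and $B_0,\dots,B_\ell$ such that $\{A_0,B_0\}$ and $\{A_\ell,B_\ell\}$ are edges of $G(\mathcal{H})$ and every edge of $G(\mathcal{H})$ between the two paths is of the form $\{A_i,B_i\}$ for some $i$; (iii) if $R,R'\in\mathcal{R}(\mathcal{H}_0)$ are not adjacent in $G(\mathcal{H}_0)$, then there are no edges of $G(\mathcal{H})$ between $\rho^{-1}(R)$ and $\rho^{-1}(R')$.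
   Context: A hyperplane arrangement is a finite set of linear hyperplanes in $\mathbb{R}^d$; its rank is the dimension of the span of the normals; $\mathcal{R}(\mathcal{H})$ denotes its set of regions (connected components of the complement of the union of the hyperplanes), and $G(\mathcal{H})$ its graph of regions (regions adjacent iff separated by exactly one hyperplane). An arrangement of rank $n$ is supersolvable if $n\le 2$, or $n\ge 3$ and $\mathcal{H}=\mathcal{H}_0\sqcup\mathcal{H}_1$ with both parts nonempty, $\mathcal{H}_0$ supersolvable of rank $n-1$, and for any distinct $H',H''\in\mathcal{H}_1$ some $H\in\mathcal{H}_0$ satisfies $H'\cap H''\subseteq H$. The length of a path is its number of edges. *)

theory Defs
  imports "HOL-Analysis.Analysis"
begin

definition lin_hyperplane :: "'a::euclidean_space set \<Rightarrow> bool" where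
  "lin_hyperplane H \<longleftrightarrow> (\<exists>a. a \<noteq> 0 \<and> H = {x. a \<bullet> x = 0})"

definition arrangement :: "'a::euclidean_space set set \<Rightarrow> bool" where
  "arrangement \<H> \<longleftrightarrow> finite \<H> \<and> (\<forall>H\<in>\<H>. lin_hyperplane H)"

definition arr_rank :: "'a::euclidean_space set set \<Rightarrow> nat" where
  "arr_rank \<H> = dim {a. a \<noteq> 0 \<and> (\<exists>H\<in>\<H>. H = {x. a \<bullet> x = 0})}"

definition regions :: "'a::euclidean_space set set \<Rightarrow> 'a set set" where
  "regions \<H> = components (UNIV - \<Union>\<H>)"

definition separates :: "'a::euclidean_space set \<Rightarrow> 'a set \<Rightarrow> 'a set \<Rightarrow> bool" where
  "separates H R R' \<longleftrightarrow> (\<exists>a. H = {x. a \<bullet> x = 0} \<and> (\<forall>x\<in>R. a \<bullet> x > 0) \<and> (\<forall>y\<in>R'. a \<bullet> y < 0))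
                        \<or> (\<exists>a. H = {x. a \<bullet> x = 0} \<and> (\<forall>x\<in>R. a \<bullet> x < 0) \<and> (\<forall>y\<in>R'. a \<bullet> y > 0))"

definition region_adj :: "'a::euclidean_space set set \<Rightarrow> 'a set \<Rightarrow> 'a set \<Rightarrow> bool" where
  "region_adj \<H> R R' \<longleftrightarrow> R \<in> regions \<H> \<and> R' \<in> regions \<H> \<and>
     card {H\<in>\<H>. separates H R R'} = 1"

definition modular_cond :: "'a::euclidean_space set set \<Rightarrow> 'a set set \<Rightarrow> bool" where
  "modular_cond \<H>0 \<H>1 \<longleftrightarrow>
     (\<forall>H'\<in>\<H>1. \<forall>H''\<in>\<H>1. H' \<noteq> H'' \<longrightarrow> (\<exists>H\<in>\<H>0. H' \<inter> H'' \<subseteq> H))"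

inductive supersolvable :: "'a::euclidean_space set set \<Rightarrow> bool" where
  base: "arrangement \<H> \<Longrightarrow> arr_rank \<H> \<le> 2 \<Longrightarrow> supersolvable \<H>"
| step: "arrangement \<H> \<Longrightarrow> arr_rank \<H> \<ge> 3 \<Longrightarrow> \<H> = \<H>0 \<union> \<H>1 \<Longrightarrow> \<H>0 \<inter> \<H>1 = {} \<Longrightarrow>
         \<H>0 \<noteq> {} \<Longrightarrow> \<H>1 \<noteq> {} \<Longrightarrow> supersolvable \<H>0 \<Longrightarrow> arr_rank \<H>0 = arr_rank \<H> - 1 \<Longrightarrow>
         modular_cond \<H>0 \<H>1 \<Longrightarrow> supersolvable \<H>"

definition rho :: "'a::euclidean_space set set \<Rightarrow> 'a set \<Rightarrow> 'a set" where
  "rho \<H>0 A = (THE R. R \<in> regions \<H>0 \<and> A \<subseteq> R)"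

text \<open>A is an enumeration A 0, ..., A l of the vertex set S such that the subgraph
  of adj induced by S is the path A 0 - A 1 - ... - A l (of length l).\<close>
definition path_enum :: "('v \<Rightarrow> 'v \<Rightarrow> bool) \<Rightarrow> 'v set \<Rightarrow> nat \<Rightarrow> (nat \<Rightarrow> 'v) \<Rightarrow> bool" where
  "path_enum adj S l A \<longleftrightarrow> bij_betw A {0..l} S \<and>
     (\<forall>i\<le>l. \<forall>j\<le>l. adj (A i) (A j) \<longleftrightarrow> (i = Suc j \<or> j = Suc i))"

end

theory Submission
  imports Defs
begin

text \<open>Fix normals for the hyperplanes: regions become the cells of constant sign vector, and two
  regions are adjacent iff their sign vectors differ in exactly one hyperplane. The rank drop and the
  modular condition give a vector v on every hyperplane of H0 and on none of H1; orient the normals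
  of H1 to be 1 at v. Over a region R of H0 the modular condition (two hyperplanes of H1 meet only
  inside the union of H0) forces the H1-parts of the sign vectors to form a chain, and the line
  through a point of R in direction v crosses the hyperplanes of H1 one at a time, so all
  card H1 + 1 levels of the chain occur: the fiber over R is a path ordered by level. An edge between
  two fibers changes exactly one H0-sign and no H1-sign, so it lies over an edge of the graph of H0
  and joins regions of equal level; levels 0 and card H1 are the all-negative and all-positive
  H1-sign vectors, which gives the two end edges.\<close>

lemma segment_ivt_hyperplane:
  assumes "a \<bullet> x \<le> b" "b \<le> a \<bullet> y"
  shows "\<exists>z\<in>closed_segment x y. a \<bullet> z = b"
  using connected_ivt_hyperplane[OF connected_segment _ _ assms] by auto

lemma card_sym_diff_nested:
  assumes "finite P" "finite Q" "P \<subseteq> Q \<or> Q \<subseteq> P"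
  shows "card (sym_diff P Q) = (card P - card Q) + (card Q - card P)"
  using assms(3)
proof
  assume "P \<subseteq> Q"
  then have "sym_diff P Q = Q - P" "card P \<le> card Q"
    using card_mono[OF assms(2)] by auto
  then show ?thesis using \<open>P \<subseteq> Q\<close> assms by (simp add: card_Diff_subset finite_subset)
next
  assume "Q \<subseteq> P"
  then have "sym_diff P Q = P - Q" "card Q \<le> card P"
    using card_mono[OF assms(1)] by auto
  then show ?thesis using \<open>Q \<subseteq> P\<close> assms by (simp add: card_Diff_subset finite_subset)
qed

lemma ex_cut_with_card_below:
  fixes T :: "'a::unbounded_dense_linorder set"
  assumes "finite T" "m \<le> card T"
  shows "\<exists>t. t \<notin> T \<and> card {u\<in>T. u < t} = m"
  using assms
proof (induction T arbitrary: m rule: finite_linorder_max_induct)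
  case empty
  then show ?case by simp
next
  case (insert b A)
  show ?case
  proof (cases "m = card A + 1")
    case True
    obtain t where "b < t" using gt_ex by blast
    then have "{u\<in>insert b A. u < t} = insert b A" "t \<notin> insert b A"
      using insert.hyps by auto
    then show ?thesis using True insert.hyps by (intro exI[of _ t]) auto
  next
    case False
    then have "m \<le> card A" using insert by (auto simp: card_insert_if)
    then obtain t where t: "t \<notin> A" "card {u\<in>A. u < t} = m" using insert.IH by blast
    obtain c where c: "\<forall>a\<in>A. a < c" "c < b"
    proof (cases "A = {}")
      case True
      then show ?thesis using that lt_ex by blast
    next
      case False
      then obtain c where "Max A < c" "c < b" using dense insert by (meson Max_in)
      then show ?thesis using that insert.hyps(1) by (meson Max_ge le_less_trans)
    qed
    have "{u\<in>insert b A. u < min t c} = {u\<in>A. u < t}"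
      using c by (auto simp: min_less_iff_conj)
    moreover have "min t c \<notin> insert b A"
      using c t(1) by (cases "t \<le> c") (auto simp: min_def)
    ultimately show ?thesis using t(2) by (intro exI[of _ "min t c"]) simp
  qed
qed

lemma ex_in_subspace_avoiding_subspaces:
  fixes X :: "'a::real_vector set"
  assumes "subspace X" "finite F" "\<forall>S\<in>F. subspace S \<and> \<not> X \<subseteq> S"
  shows "\<exists>v\<in>X. \<forall>S\<in>F. v \<notin> S"
  using assms(2,3)
proof (induction F rule: finite_induct)
  case empty
  then show ?case using subspace_0[OF assms(1)] by blast
next
  case (insert S F)
  then obtain v where v: "v \<in> X" "\<forall>T\<in>F. v \<notin> T" by auto
  obtain w where w: "w \<in> X" "w \<notin> S" using insert.prems by blast
  have at_most_one: "s = t" if T: "T \<in> insert S F" and "v + s *\<^sub>R w \<in> T" "v + t *\<^sub>R w \<in> T" for T s t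
  proof (rule ccontr)
    assume "s \<noteq> t"
    have T_sub: "subspace T" using T insert.prems by blast
    have "(v + s *\<^sub>R w) - (v + t *\<^sub>R w) \<in> T"
      using subspace_diff[OF T_sub that(2,3)] .
    then have "(s - t) *\<^sub>R w \<in> T" by (simp add: algebra_simps)
    then have "inverse (s - t) *\<^sub>R ((s - t) *\<^sub>R w) \<in> T" by (rule subspace_scale[OF T_sub])
    then have "w \<in> T" using \<open>s \<noteq> t\<close> by simp
    moreover have "(v + s *\<^sub>R w) - s *\<^sub>R w \<in> T"
      using subspace_diff[OF T_sub that(2) subspace_scale[OF T_sub \<open>w \<in> T\<close>]] .
    then have "v \<in> T" by simp
    ultimately show False using T v w by blast
  qed
  define bad where "bad = (\<Union>T\<in>insert S F. {t. v + t *\<^sub>R w \<in> T})"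
  have "finite {t. v + t *\<^sub>R w \<in> T}" if "T \<in> insert S F" for T
  proof -
    have "{t. v + t *\<^sub>R w \<in> T} = {} \<or> (\<exists>t. {t. v + t *\<^sub>R w \<in> T} = {t})"
      using at_most_one[OF that] by blast
    then show ?thesis by auto
  qed
  then have "finite bad" unfolding bad_def using insert.hyps by blast
  then obtain t where t: "t \<notin> bad" using ex_new_if_finite[OF infinite_UNIV_char_0] by blast
  have "v + t *\<^sub>R w \<in> X" using v w assms(1) subspace_add subspace_scale by blast
  moreover have "\<forall>T\<in>insert S F. v + t *\<^sub>R w \<notin> T" using t unfolding bad_def by blast
  ultimately show ?case by (rule bexI[rotated])
qed

lemma not_in_span_orthogonal_witness:
  fixes a :: "'a::euclidean_space"
  assumes "a \<notin> span A"
  shows "\<exists>z. (\<forall>b\<in>A. b \<bullet> z = 0) \<and> a \<bullet> z \<noteq> 0"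
proof -
  obtain y z where yz: "y \<in> span A" "\<And>w. w \<in> span A \<Longrightarrow> orthogonal z w" "a = y + z"
    using orthogonal_subspace_decomp_exists by blast
  have "b \<bullet> z = 0" if "b \<in> A" for b
    using yz(2)[OF span_base[OF that]] by (simp add: orthogonal_def inner_commute)
  moreover have "a \<bullet> z = z \<bullet> z"
    using yz(2)[OF yz(1)] yz(3) by (simp add: orthogonal_def inner_add_left inner_add_right inner_commute)
  moreover have "z \<noteq> 0" using yz assms by auto
  ultimately show ?thesis by (intro exI[of _ z]) auto
qed

lemma lin_hyperplane_subspace: "lin_hyperplane H \<Longrightarrow> subspace H"
  unfolding lin_hyperplane_def using subspace_hyperplane by blast

lemma lin_hyperplane_subset_imp_eq:
  assumes "lin_hyperplane H" "lin_hyperplane K" "H \<subseteq> K"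
  shows "H = K"
proof -
  obtain a b where "a \<noteq> 0" "H = {x. a \<bullet> x = 0}" "b \<noteq> 0" "K = {x. b \<bullet> x = 0}"
    using assms(1,2) unfolding lin_hyperplane_def by blast
  then show ?thesis
    using assms(3) by (intro subspace_dim_equal) (auto simp: dim_hyperplane subspace_hyperplane)
qed

lemma hyperplane_inter_subset_imp_subset:
  assumes G: "lin_hyperplane G" and "subspace H" "subspace K"
    and z: "z \<in> H" "z \<in> K" "z \<notin> G" and "H \<inter> G \<subseteq> K"
  shows "H \<subseteq> K"
proof
  fix x assume "x \<in> H"
  obtain g where g: "G = {x. g \<bullet> x = 0}" using G unfolding lin_hyperplane_def by blast
  define x' where "x' = x - ((g \<bullet> x) / (g \<bullet> z)) *\<^sub>R z"
  have "g \<bullet> z \<noteq> 0" using z g by blast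
  then have "x' \<in> G" unfolding x'_def g by (simp add: inner_diff_right)
  moreover have "x' \<in> H" unfolding x'_def using \<open>x \<in> H\<close> z \<open>subspace H\<close>
    by (simp add: subspace_diff subspace_scale)
  ultimately have "x' \<in> K" using \<open>H \<inter> G \<subseteq> K\<close> by blast
  then show "x \<in> K" unfolding x'_def using z \<open>subspace K\<close>
    by (metis diff_add_cancel subspace_add subspace_scale)
qed

section \<open>Regions as sign cells\<close>

definition normals :: "('a::euclidean_space set \<Rightarrow> 'a) \<Rightarrow> 'a set set \<Rightarrow> bool" where
  "normals N S \<longleftrightarrow> (\<forall>H\<in>S. N H \<noteq> 0 \<and> H = {x. N H \<bullet> x = 0})"

definition pos_side :: "('a::euclidean_space set \<Rightarrow> 'a) \<Rightarrow> 'a set set \<Rightarrow> 'a \<Rightarrow> 'a set set" where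
  "pos_side N S x = {H\<in>S. N H \<bullet> x > 0}"

definition sign_cell :: "('a::euclidean_space set \<Rightarrow> 'a) \<Rightarrow> 'a set set \<Rightarrow> 'a \<Rightarrow> 'a set" where
  "sign_cell N S x = {y. y \<notin> \<Union>S \<and> pos_side N S y = pos_side N S x}"

lemma normals_subset: "normals N S \<Longrightarrow> T \<subseteq> S \<Longrightarrow> normals N T"
  unfolding normals_def by blast

lemma normals_notin_Union_iff: "normals N S \<Longrightarrow> y \<notin> \<Union>S \<longleftrightarrow> (\<forall>H\<in>S. N H \<bullet> y \<noteq> 0)"
  unfolding normals_def by blast

lemma pos_side_subset: "pos_side N S x \<subseteq> S"
  unfolding pos_side_def by auto

lemma pos_side_Un: "pos_side N (S \<union> T) x = pos_side N S x \<union> pos_side N T x"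
  unfolding pos_side_def by auto

lemma sign_cell_self: "x \<notin> \<Union>S \<Longrightarrow> x \<in> sign_cell N S x"
  unfolding sign_cell_def by auto

lemma sign_cell_eq_iff:
  "x \<notin> \<Union>S \<Longrightarrow> y \<notin> \<Union>S \<Longrightarrow> sign_cell N S x = sign_cell N S y \<longleftrightarrow> pos_side N S x = pos_side N S y"
  unfolding sign_cell_def by blast

lemma sign_cell_sign:
  assumes "normals N S" "x \<notin> \<Union>S" "z \<in> sign_cell N S x" "H \<in> S"
  shows "(N H \<bullet> z > 0 \<longleftrightarrow> N H \<bullet> x > 0) \<and> N H \<bullet> z \<noteq> 0"
  using assms unfolding sign_cell_def pos_side_def normals_def by blast

lemma sign_cell_eq_halfspaces:
  assumes N: "normals N S" and x: "x \<notin> \<Union>S"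
  shows "sign_cell N S x =
    (\<Inter>H\<in>S. if N H \<bullet> x > 0 then {y. N H \<bullet> y > 0} else {y. N H \<bullet> y < 0})"
proof (intro equalityI subsetI)
  fix y assume "y \<in> sign_cell N S x"
  then show "y \<in> (\<Inter>H\<in>S. if N H \<bullet> x > 0 then {y. N H \<bullet> y > 0} else {y. N H \<bullet> y < 0})"
    using sign_cell_sign[OF N x] by (force simp: linorder_neq_iff)
next
  fix y assume y: "y \<in> (\<Inter>H\<in>S. if N H \<bullet> x > 0 then {y. N H \<bullet> y > 0} else {y. N H \<bullet> y < 0})"
  have "N H \<bullet> y \<noteq> 0 \<and> (N H \<bullet> y > 0 \<longleftrightarrow> N H \<bullet> x > 0)" if "H \<in> S" for H
  proof -
    have "y \<in> (if N H \<bullet> x > 0 then {y. N H \<bullet> y > 0} else {y. N H \<bullet> y < 0})"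
      using y that by blast
    then show ?thesis by (cases "N H \<bullet> x > 0") auto
  qed
  then show "y \<in> sign_cell N S x"
    unfolding sign_cell_def pos_side_def normals_notin_Union_iff[OF N] by auto
qed

lemma convex_sign_cell:
  assumes "normals N S" "x \<notin> \<Union>S"
  shows "convex (sign_cell N S x)"
  unfolding sign_cell_eq_halfspaces[OF assms]
  by (intro convex_INT ballI) (simp add: convex_halfspace_gt convex_halfspace_lt)

lemma connected_component_eq_sign_cell:
  assumes N: "normals N S" and x: "x \<notin> \<Union>S"
  shows "connected_component_set (- \<Union>S) x = sign_cell N S x"
proof
  show "sign_cell N S x \<subseteq> connected_component_set (- \<Union>S) x"
    using sign_cell_self[OF x] convex_connected[OF convex_sign_cell[OF assms]]
    by (intro connected_component_maximal) (auto simp: sign_cell_def)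
next
  let ?C = "connected_component_set (- \<Union>S) x"
  show "?C \<subseteq> sign_cell N S x"
  proof
    fix y assume y: "y \<in> ?C"
    have C: "?C \<subseteq> - \<Union>S" "x \<in> ?C" using x by (auto simp: connected_component_subset)
    have "N H \<bullet> y > 0 \<longleftrightarrow> N H \<bullet> x > 0" if H: "H \<in> S" for H
    proof (rule ccontr)
      assume "\<not> ?thesis"
      then have "N H \<bullet> x \<le> 0 \<and> 0 \<le> N H \<bullet> y \<or> N H \<bullet> y \<le> 0 \<and> 0 \<le> N H \<bullet> x" by auto
      then have "\<exists>z\<in>?C. N H \<bullet> z = 0"
        using connected_ivt_hyperplane[OF connected_connected_component C(2) y, of "N H" 0]
          connected_ivt_hyperplane[OF connected_connected_component y C(2), of "N H" 0] by blast
      then show False using C H N unfolding normals_def by blast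
    qed
    then show "y \<in> sign_cell N S x"
      using y C unfolding sign_cell_def pos_side_def by auto
  qed
qed

lemma regions_eq_sign_cells:
  assumes "normals N S"
  shows "regions S = sign_cell N S ` (- \<Union>S)"
  unfolding regions_def components_def Compl_eq_Diff_UNIV[symmetric]
  using connected_component_eq_sign_cell[OF assms] by auto

lemma separates_sign_cell_iff:
  assumes N: "normals N S" and x: "x \<notin> \<Union>S" and y: "y \<notin> \<Union>S" and H: "H \<in> S"
  shows "separates H (sign_cell N S x) (sign_cell N S y) \<longleftrightarrow> ((H \<in> pos_side N S x) \<noteq> (H \<in> pos_side N S y))"
proof
  assume "separates H (sign_cell N S x) (sign_cell N S y)"
  then obtain a where "H = {z. a \<bullet> z = 0}" "a \<bullet> x < 0 \<and> a \<bullet> y > 0 \<or> a \<bullet> x > 0 \<and> a \<bullet> y < 0"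
    using sign_cell_self[OF x] sign_cell_self[OF y] unfolding separates_def by blast
  then obtain z where z: "z \<in> closed_segment x y" "z \<in> H"
    using segment_ivt_hyperplane[of a x 0 y] segment_ivt_hyperplane[of a y 0 x]
    by (auto simp: closed_segment_commute less_imp_le)
  show "(H \<in> pos_side N S x) \<noteq> (H \<in> pos_side N S y)"
  proof
    assume "(H \<in> pos_side N S x) = (H \<in> pos_side N S y)"
    then have "N H \<bullet> x > 0 \<and> N H \<bullet> y > 0 \<or> N H \<bullet> x < 0 \<and> N H \<bullet> y < 0"
      using H sign_cell_sign[OF N x sign_cell_self[OF x] H] sign_cell_sign[OF N y sign_cell_self[OF y] H]
      unfolding pos_side_def by auto
    then have "closed_segment x y \<subseteq> {w. N H \<bullet> w > 0} \<or> closed_segment x y \<subseteq> {w. N H \<bullet> w < 0}"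
      by (metis closed_segment_subset convex_halfspace_gt convex_halfspace_lt mem_Collect_eq)
    moreover have "N H \<bullet> z = 0" using z N H unfolding normals_def by blast
    ultimately show False using z(1) by auto
  qed
next
  assume "(H \<in> pos_side N S x) \<noteq> (H \<in> pos_side N S y)"
  then consider "N H \<bullet> x > 0" "\<not> N H \<bullet> y > 0" | "\<not> N H \<bullet> x > 0" "N H \<bullet> y > 0"
    using H unfolding pos_side_def by auto
  then show "separates H (sign_cell N S x) (sign_cell N S y)"
  proof cases
    case 1
    then have "\<forall>z\<in>sign_cell N S x. N H \<bullet> z > 0" "\<forall>z\<in>sign_cell N S y. N H \<bullet> z < 0"
      using sign_cell_sign[OF N x _ H] sign_cell_sign[OF N y _ H] by (auto simp: linorder_neq_iff)
    then show ?thesis using N H unfolding separates_def normals_def by blast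
  next
    case 2
    then have "\<forall>z\<in>sign_cell N S x. N H \<bullet> z < 0" "\<forall>z\<in>sign_cell N S y. N H \<bullet> z > 0"
      using sign_cell_sign[OF N x _ H] sign_cell_sign[OF N y _ H] by (auto simp: linorder_neq_iff)
    then show ?thesis using N H unfolding separates_def normals_def by blast
  qed
qed

lemma region_adj_sign_cell_iff:
  assumes "normals N S" "x \<notin> \<Union>S" "y \<notin> \<Union>S"
  shows "region_adj S (sign_cell N S x) (sign_cell N S y) \<longleftrightarrow>
    card (sym_diff (pos_side N S x) (pos_side N S y)) = 1"
proof -
  have "{H\<in>S. separates H (sign_cell N S x) (sign_cell N S y)} = sym_diff (pos_side N S x) (pos_side N S y)"
    using separates_sign_cell_iff[OF assms] pos_side_subset by blast
  then show ?thesis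
    unfolding region_adj_def regions_eq_sign_cells[OF assms(1)] using assms(2,3) by auto
qed

lemma rho_sign_cell:
  assumes N: "normals N S" and "T \<subseteq> S" and x: "x \<notin> \<Union>S"
  shows "rho T (sign_cell N S x) = sign_cell N T x"
  unfolding rho_def
proof (rule the_equality)
  have NT: "normals N T" using normals_subset assms(1,2) .
  have xT: "x \<notin> \<Union>T" using assms by auto
  have "pos_side N T y = pos_side N S y \<inter> T" for y
    using \<open>T \<subseteq> S\<close> unfolding pos_side_def by blast
  then have "sign_cell N S x \<subseteq> sign_cell N T x"
    using \<open>T \<subseteq> S\<close> unfolding sign_cell_def by auto
  then show "sign_cell N T x \<in> regions T \<and> sign_cell N S x \<subseteq> sign_cell N T x"
    using regions_eq_sign_cells[OF NT] xT by auto
  fix R assume R: "R \<in> regions T \<and> sign_cell N S x \<subseteq> R"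
  then obtain z where "z \<notin> \<Union>T" "R = sign_cell N T z"
    using regions_eq_sign_cells[OF NT] by auto
  then show "R = sign_cell N T x"
    using R sign_cell_self[OF x] xT unfolding sign_cell_def by auto
qed

section \<open>A direction along the modular flat\<close>

lemma arrangement_ex_normals:
  assumes "arrangement S"
  obtains N where "normals N S"
proof -
  have "\<forall>H\<in>S. \<exists>a. a \<noteq> 0 \<and> H = {x. a \<bullet> x = 0}"
    using assms unfolding arrangement_def lin_hyperplane_def by blast
  from bchoice[OF this] obtain N where "\<forall>H\<in>S. N H \<noteq> 0 \<and> H = {x. N H \<bullet> x = 0}" by blast
  then show ?thesis using that unfolding normals_def by blast
qed

lemma rank_drop_ex_hyperplane_off_flat:
  assumes "arrangement (H0 \<union> H1)" "arr_rank H0 < arr_rank (H0 \<union> H1)"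
  shows "\<exists>G\<in>H1. \<not> \<Inter>H0 \<subseteq> G"
proof -
  define normal_set where "normal_set S = {a. a \<noteq> 0 \<and> (\<exists>H\<in>S. H = {x. a \<bullet> x = 0})}"
    for S :: "'a set set"
  have "\<not> normal_set (H0 \<union> H1) \<subseteq> span (normal_set H0)"
  proof
    assume "normal_set (H0 \<union> H1) \<subseteq> span (normal_set H0)"
    then have "dim (normal_set (H0 \<union> H1)) \<le> dim (normal_set H0)"
      using dim_subset dim_span by metis
    then show False using assms(2) unfolding arr_rank_def normal_set_def by simp
  qed
  then obtain a G where a: "a \<noteq> 0" "G \<in> H0 \<union> H1" "G = {x. a \<bullet> x = 0}" "a \<notin> span (normal_set H0)"
    unfolding normal_set_def by blast
  have "G \<notin> H0"
  proof
    assume "G \<in> H0"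
    then have "a \<in> normal_set H0" using a(1,3) unfolding normal_set_def by blast
    then show False using a(4) span_base by blast
  qed
  then have "G \<in> H1" using a(2) by blast
  obtain z where z: "\<forall>b\<in>normal_set H0. b \<bullet> z = 0" "a \<bullet> z \<noteq> 0"
    using not_in_span_orthogonal_witness[OF a(4)] by blast
  have "z \<in> \<Inter>H0"
  proof
    fix K assume "K \<in> H0"
    then obtain b where "b \<noteq> 0" "K = {x. b \<bullet> x = 0}"
      using assms(1) unfolding arrangement_def lin_hyperplane_def by blast
    moreover have "b \<in> normal_set H0" using calculation \<open>K \<in> H0\<close> unfolding normal_set_def by blast
    ultimately show "z \<in> K" using z(1) by simp
  qed
  moreover have "z \<notin> G" using a(3) z(2) by simp
  ultimately show ?thesis using \<open>G \<in> H1\<close> by blast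
qed

lemma modular_hyperplanes_off_flat:
  assumes "arrangement (H0 \<union> H1)" "H0 \<inter> H1 = {}" "modular_cond H0 H1"
    and "G \<in> H1" "\<not> \<Inter>H0 \<subseteq> G" "h \<in> H1"
  shows "\<not> \<Inter>H0 \<subseteq> h"
proof
  assume flat_h: "\<Inter>H0 \<subseteq> h"
  have hyp: "lin_hyperplane H" if "H \<in> H0 \<union> H1" for H
    using assms(1) that unfolding arrangement_def by blast
  obtain z where z: "z \<in> \<Inter>H0" "z \<notin> G" using assms(5) by blast
  have "h \<noteq> G" using flat_h assms(5) by blast
  then obtain K where K: "K \<in> H0" "h \<inter> G \<subseteq> K"
    using assms(3,4,6) unfolding modular_cond_def by blast
  have "h \<subseteq> K"
    using z flat_h K assms(4,6) hyp
    by (intro hyperplane_inter_subset_imp_subset[of G h K z]) (auto intro: lin_hyperplane_subspace)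
  then have "h = K" using lin_hyperplane_subset_imp_eq hyp K(1) assms(6) by blast
  then show False using K(1) assms(2,6) by blast
qed

lemma modular_ex_direction:
  assumes "arrangement (H0 \<union> H1)" "H0 \<inter> H1 = {}" "modular_cond H0 H1"
    and "arr_rank H0 < arr_rank (H0 \<union> H1)"
  shows "\<exists>v\<in>\<Inter>H0. v \<notin> \<Union>H1"
proof -
  have hyp: "lin_hyperplane H" if "H \<in> H0 \<union> H1" for H
    using assms(1) that unfolding arrangement_def by blast
  have "subspace (\<Inter>H0)" using hyp lin_hyperplane_subspace by (blast intro: subspace_Inter)
  moreover have "finite H1" using assms(1) unfolding arrangement_def by blast
  moreover obtain G where G: "G \<in> H1" "\<not> \<Inter>H0 \<subseteq> G"
    using rank_drop_ex_hyperplane_off_flat[OF assms(1,4)] by blast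
  have "\<forall>h\<in>H1. subspace h \<and> \<not> \<Inter>H0 \<subseteq> h"
    using modular_hyperplanes_off_flat[OF assms(1-3) G] hyp lin_hyperplane_subspace by blast
  ultimately obtain v where "v \<in> \<Inter>H0" "\<forall>h\<in>H1. v \<notin> h"
    using ex_in_subspace_avoiding_subspaces by blast
  then show ?thesis by blast
qed

section \<open>Fibers over the regions of H0\<close>

lemma not_region_adj_self:
  assumes "normals N S"
  shows "\<not> region_adj S R R"
proof
  assume "region_adj S R R"
  then obtain x where "x \<notin> \<Union>S" "R = sign_cell N S x" "region_adj S R R"
    using regions_eq_sign_cells[OF assms] unfolding region_adj_def by auto
  then show False using region_adj_sign_cell_iff[OF assms] by simp
qed

locale modular_fibration =
  fixes Hs H0 H1 :: "'a::euclidean_space set set" and M :: "'a set \<Rightarrow> 'a" and v :: 'a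
  assumes finite_Hs: "finite Hs" and Hs_split: "Hs = H0 \<union> H1" and split_disjoint: "H0 \<inter> H1 = {}"
    and normals_Hs: "normals M Hs"
    and direction_flat: "\<forall>K\<in>H0. M K \<bullet> v = 0"
    and direction_transversal: "\<forall>h\<in>H1. M h \<bullet> v = 1"
    and modular: "modular_cond H0 H1"
begin

lemma normals_H0: "normals M H0"
  using normals_subset[OF normals_Hs] Hs_split by blast

lemma finite_H0: "finite H0" and finite_H1: "finite H1"
  using finite_Hs Hs_split by auto

lemma modular_pair_meet_in_H0:
  assumes "h \<in> H1" "h' \<in> H1" "h \<noteq> h'" "M h \<bullet> w = 0" "M h' \<bullet> w = 0"
  shows "w \<in> \<Union>H0"
proof -
  obtain K where "K \<in> H0" "h \<inter> h' \<subseteq> K"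
    using modular assms(1-3) unfolding modular_cond_def by blast
  moreover have "w \<in> h" "w \<in> h'"
    using normals_Hs assms Hs_split unfolding normals_def by blast+
  ultimately show ?thesis by blast
qed

lemma inner_H0_translate: "K \<in> H0 \<Longrightarrow> M K \<bullet> (z + t *\<^sub>R v) = M K \<bullet> z"
  using direction_flat by (simp add: inner_add_right)

lemma inner_H1_translate: "h \<in> H1 \<Longrightarrow> M h \<bullet> (z + t *\<^sub>R v) = M h \<bullet> z + t"
  using direction_transversal by (simp add: inner_add_right)

lemma translate_notin_H0: "z \<notin> \<Union>H0 \<Longrightarrow> z + t *\<^sub>R v \<notin> \<Union>H0"
  using normals_notin_Union_iff[OF normals_H0] inner_H0_translate by metis

lemma pos_side_H0_translate: "pos_side M H0 (z + t *\<^sub>R v) = pos_side M H0 z"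
  unfolding pos_side_def using inner_H0_translate by auto

lemma pos_side_H1_nested:
  assumes x: "x \<notin> \<Union>Hs" and y: "y \<notin> \<Union>Hs" and same: "pos_side M H0 x = pos_side M H0 y"
  shows "pos_side M H1 x \<subseteq> pos_side M H1 y \<or> pos_side M H1 y \<subseteq> pos_side M H1 x"
proof (rule ccontr)
  assume "\<not> ?thesis"
  then obtain h h' where h: "h \<in> pos_side M H1 x - pos_side M H1 y"
    and h': "h' \<in> pos_side M H1 y - pos_side M H1 x" by blast
  then have hH1: "h \<in> H1" "h' \<in> H1" "h \<noteq> h'" unfolding pos_side_def by auto
  have "M g \<bullet> x \<noteq> 0" "M g \<bullet> y \<noteq> 0" if "g \<in> H1" for g
    using normals_notin_Union_iff[OF normals_Hs] x y that Hs_split by auto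
  then have signs: "M h \<bullet> x > 0" "M h \<bullet> y < 0" "M h' \<bullet> y > 0" "M h' \<bullet> x < 0"
    using h h' hH1 unfolding pos_side_def by (auto simp: linorder_neq_iff)
  obtain z where z: "z \<in> closed_segment x y" "(M h - M h') \<bullet> z = 0"
    using segment_ivt_hyperplane[of "M h - M h'" y 0 x] signs
    by (auto simp: inner_diff_left closed_segment_commute)
  have "x \<in> sign_cell M H0 x" "y \<in> sign_cell M H0 x"
    using x y same Hs_split unfolding sign_cell_def by auto
  then have "z \<in> sign_cell M H0 x"
    using z(1) convex_sign_cell[OF normals_H0] x Hs_split closed_segment_subset by blast
  then have z0: "z \<notin> \<Union>H0" unfolding sign_cell_def by blast
  \<comment> \<open>M h and M h' agree at z and both equal 1 at v, so sliding z along v onto h also lands on h'\<close>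
  define w where "w = z + (- (M h \<bullet> z)) *\<^sub>R v"
  have "M h \<bullet> z = M h' \<bullet> z" using z(2) by (simp add: inner_diff_left)
  then have "M h \<bullet> w = 0" "M h' \<bullet> w = 0"
    unfolding w_def using inner_H1_translate[OF hH1(1)] inner_H1_translate[OF hH1(2)]
    by (simp_all del: scaleR_minus_left)
  then show False
    using modular_pair_meet_in_H0[OF hH1] translate_notin_H0[OF z0] unfolding w_def by blast
qed

lemma ex_point_with_pos_side_card:
  assumes p: "p \<notin> \<Union>H0" and m: "m \<le> card H1"
  shows "\<exists>y. y \<notin> \<Union>Hs \<and> pos_side M H0 y = pos_side M H0 p \<and> card (pos_side M H1 y) = m"
proof -
  \<comment> \<open>the line p + t v crosses h at t = crossing h; modularity makes these parameters distinct\<close>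
  define crossing where "crossing h = - (M h \<bullet> p)" for h
  have on_line: "M h \<bullet> (p + t *\<^sub>R v) = t - crossing h" if "h \<in> H1" for h t
    using inner_H1_translate[OF that] unfolding crossing_def by simp
  have "inj_on crossing H1"
  proof (rule inj_onI, rule ccontr)
    fix h h' assume hh: "h \<in> H1" "h' \<in> H1" "crossing h = crossing h'" "h \<noteq> h'"
    then have "M h \<bullet> (p + crossing h *\<^sub>R v) = 0" "M h' \<bullet> (p + crossing h *\<^sub>R v) = 0"
      using on_line by auto
    then show False using modular_pair_meet_in_H0 hh translate_notin_H0[OF p] by blast
  qed
  then have "card (crossing ` H1) = card H1" by (rule card_image)
  then obtain t where t: "t \<notin> crossing ` H1" "card {u\<in>crossing ` H1. u < t} = m"
    using ex_cut_with_card_below[of "crossing ` H1" m] finite_H1 m by auto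
  define y where "y = p + t *\<^sub>R v"
  have pos1: "pos_side M H1 y = {h\<in>H1. crossing h < t}"
    unfolding pos_side_def y_def using on_line by auto
  have "card {h\<in>H1. crossing h < t} = card (crossing ` {h\<in>H1. crossing h < t})"
    using inj_on_subset[OF \<open>inj_on crossing H1\<close>] by (simp add: card_image)
  also have "crossing ` {h\<in>H1. crossing h < t} = {u\<in>crossing ` H1. u < t}" by auto
  finally have "card (pos_side M H1 y) = m" using pos1 t(2) by simp
  moreover have "y \<notin> \<Union>H1"
  proof
    assume "y \<in> \<Union>H1"
    then obtain h where h: "h \<in> H1" "y \<in> h" by blast
    then have "M h \<bullet> y = 0" using normals_Hs Hs_split unfolding normals_def by blast
    then have "t = crossing h" using on_line[OF h(1)] unfolding y_def by simp
    then show False using t(1) h(1) by blast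
  qed
  moreover have "y \<notin> \<Union>H0" unfolding y_def using translate_notin_H0[OF p] .
  moreover have "pos_side M H0 y = pos_side M H0 p" unfolding y_def by (rule pos_side_H0_translate)
  ultimately show ?thesis using Hs_split by blast
qed

lemma region_H0_eq_sign_cell:
  assumes "R \<in> regions H0" "x \<in> R" "x \<notin> \<Union>H0"
  shows "R = sign_cell M H0 x"
proof -
  obtain p where "p \<notin> \<Union>H0" "R = sign_cell M H0 p"
    using assms(1) regions_eq_sign_cells[OF normals_H0] by auto
  then show ?thesis using assms(2,3) unfolding sign_cell_def by auto
qed

lemma region_adj_Hs_iff:
  assumes "x \<notin> \<Union>Hs" "y \<notin> \<Union>Hs"
  shows "region_adj Hs (sign_cell M Hs x) (sign_cell M Hs y) \<longleftrightarrow>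
    card (sym_diff (pos_side M H0 x) (pos_side M H0 y))
      + card (sym_diff (pos_side M H1 x) (pos_side M H1 y)) = 1"
proof -
  have "sym_diff (pos_side M Hs x) (pos_side M Hs y) =
      sym_diff (pos_side M H0 x) (pos_side M H0 y) \<union> sym_diff (pos_side M H1 x) (pos_side M H1 y)"
    unfolding Hs_split pos_side_Un using split_disjoint pos_side_subset by blast
  moreover have "sym_diff (pos_side M H0 x) (pos_side M H0 y) \<inter> sym_diff (pos_side M H1 x) (pos_side M H1 y) = {}"
    using split_disjoint pos_side_subset by blast
  moreover have "finite (sym_diff (pos_side M Hi x) (pos_side M Hi y))" if "finite Hi" for Hi
    using that pos_side_subset by (meson finite_Diff finite_Un finite_subset)
  ultimately show ?thesis
    using region_adj_sign_cell_iff[OF normals_Hs assms] finite_H0 finite_H1 by (simp add: card_Un_disjoint)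
qed

lemma sign_cell_Hs_eq_iff:
  assumes "x \<notin> \<Union>Hs" "y \<notin> \<Union>Hs"
  shows "sign_cell M Hs x = sign_cell M Hs y \<longleftrightarrow>
    pos_side M H0 x = pos_side M H0 y \<and> pos_side M H1 x = pos_side M H1 y"
proof -
  have "pos_side M Hi z = pos_side M Hs z \<inter> Hi" if "Hi \<subseteq> Hs" for Hi z
    using that unfolding pos_side_def by blast
  then show ?thesis
    using sign_cell_eq_iff[OF assms] Hs_split pos_side_Un by (metis Un_upper1 Un_upper2)
qed

lemma region_adj_Hs_cases:
  assumes R: "R \<in> regions H0" "x \<in> R" "x \<notin> \<Union>Hs" and R': "R' \<in> regions H0" "y \<in> R'" "y \<notin> \<Union>Hs"
  shows "region_adj Hs (sign_cell M Hs x) (sign_cell M Hs y) \<longleftrightarrow>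
    (if R = R' then card (pos_side M H1 x) = Suc (card (pos_side M H1 y))
                    \<or> card (pos_side M H1 y) = Suc (card (pos_side M H1 x))
     else region_adj H0 R R' \<and> pos_side M H1 x = pos_side M H1 y)"
proof -
  have x0: "x \<notin> \<Union>H0" and y0: "y \<notin> \<Union>H0" using R(3) R'(3) Hs_split by auto
  have cells: "R = sign_cell M H0 x" "R' = sign_cell M H0 y"
    using region_H0_eq_sign_cell R R' x0 y0 by auto
  have fin1: "finite (pos_side M H1 z)" for z using finite_H1 pos_side_subset finite_subset by metis
  show ?thesis
  proof (cases "R = R'")
    case True
    then have "pos_side M H0 x = pos_side M H0 y" using cells sign_cell_eq_iff x0 y0 by metis
    then show ?thesis
      using region_adj_Hs_iff[OF R(3) R'(3)] pos_side_H1_nested[OF R(3) R'(3)] True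
        card_sym_diff_nested[OF fin1 fin1] by auto
  next
    case False
    then have "sym_diff (pos_side M H0 x) (pos_side M H0 y) \<noteq> {}"
      using cells sign_cell_eq_iff x0 y0 by blast
    moreover have "finite (sym_diff (pos_side M H0 x) (pos_side M H0 y))"
      using finite_H0 pos_side_subset by (meson finite_Diff finite_Un finite_subset)
    ultimately have "card (sym_diff (pos_side M H0 x) (pos_side M H0 y)) \<noteq> 0" by simp
    moreover have "region_adj H0 R R' \<longleftrightarrow> card (sym_diff (pos_side M H0 x) (pos_side M H0 y)) = 1"
      unfolding cells using region_adj_sign_cell_iff[OF normals_H0 x0 y0] .
    moreover have "card (sym_diff (pos_side M H1 x) (pos_side M H1 y)) = 0 \<longleftrightarrow>
        pos_side M H1 x = pos_side M H1 y"
      using fin1 by auto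
    ultimately show ?thesis
      using region_adj_Hs_iff[OF R(3) R'(3)] False by auto
  qed
qed

definition fiber_point :: "'a set \<Rightarrow> nat \<Rightarrow> 'a" where
  "fiber_point R m = (SOME y. y \<notin> \<Union>Hs \<and> y \<in> R \<and> card (pos_side M H1 y) = m)"

definition fiber_region :: "'a set \<Rightarrow> nat \<Rightarrow> 'a set" where
  "fiber_region R m = sign_cell M Hs (fiber_point R m)"

lemma fiber_point_spec:
  assumes "R \<in> regions H0" "m \<le> card H1"
  shows "fiber_point R m \<notin> \<Union>Hs" "fiber_point R m \<in> R" "card (pos_side M H1 (fiber_point R m)) = m"
proof -
  obtain p where p: "p \<notin> \<Union>H0" "R = sign_cell M H0 p"
    using assms(1) regions_eq_sign_cells[OF normals_H0] by auto
  have "\<exists>y. y \<notin> \<Union>Hs \<and> y \<in> R \<and> card (pos_side M H1 y) = m"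
    using ex_point_with_pos_side_card[OF p(1) assms(2)] Hs_split unfolding p(2) sign_cell_def by auto
  then show "fiber_point R m \<notin> \<Union>Hs" "fiber_point R m \<in> R" "card (pos_side M H1 (fiber_point R m)) = m"
    unfolding fiber_point_def by (metis (mono_tags, lifting) someI_ex)+
qed

lemma fiber_eq_sign_cells:
  assumes "R \<in> regions H0"
  shows "{X\<in>regions Hs. rho H0 X = R} = sign_cell M Hs ` (R - \<Union>Hs)"
proof -
  have "rho H0 (sign_cell M Hs y) = R \<longleftrightarrow> y \<in> R" if "y \<notin> \<Union>Hs" for y
  proof -
    have "y \<notin> \<Union>H0" using that Hs_split by auto
    moreover have "rho H0 (sign_cell M Hs y) = sign_cell M H0 y"
      using rho_sign_cell[OF normals_Hs _ that] Hs_split by blast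
    ultimately show ?thesis
      using region_H0_eq_sign_cell[OF assms] sign_cell_self by metis
  qed
  then show ?thesis unfolding regions_eq_sign_cells[OF normals_Hs] by auto
qed

lemma fiber_region_eq_iff:
  assumes "R \<in> regions H0" "i \<le> card H1" "j \<le> card H1"
  shows "fiber_region R i = fiber_region R j \<longleftrightarrow> i = j"
  using sign_cell_Hs_eq_iff fiber_point_spec[OF assms(1,2)] fiber_point_spec[OF assms(1,3)]
  unfolding fiber_region_def by metis

lemma fiber_eq_fiber_regions:
  assumes R: "R \<in> regions H0"
  shows "{X\<in>regions Hs. rho H0 X = R} = fiber_region R ` {0..card H1}"
proof -
  have "sign_cell M Hs y \<in> fiber_region R ` {0..card H1}" if y: "y \<in> R" "y \<notin> \<Union>Hs" for y
  proof -
    define m where "m = card (pos_side M H1 y)"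
    have m: "m \<le> card H1" unfolding m_def using finite_H1 pos_side_subset card_mono by metis
    note z = fiber_point_spec[OF R m]
    have y0: "y \<notin> \<Union>H0" and z0: "fiber_point R m \<notin> \<Union>H0" using y z Hs_split by auto
    have "pos_side M H0 y = pos_side M H0 (fiber_point R m)"
      using region_H0_eq_sign_cell[OF R y(1) y0] region_H0_eq_sign_cell[OF R z(2) z0]
        sign_cell_eq_iff[OF y0 z0] by metis
    moreover have "pos_side M H1 y = pos_side M H1 (fiber_point R m)"
      using pos_side_H1_nested[OF y(2) z(1) calculation] z(3) finite_H1 pos_side_subset
      unfolding m_def by (metis card_subset_eq finite_subset)
    ultimately have "sign_cell M Hs y = fiber_region R m"
      unfolding fiber_region_def using sign_cell_Hs_eq_iff y(2) z(1) by blast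
    then show ?thesis using m by auto
  qed
  moreover have "fiber_region R m \<in> sign_cell M Hs ` (R - \<Union>Hs)" if "m \<le> card H1" for m
    using fiber_point_spec[OF R that] unfolding fiber_region_def by blast
  ultimately show ?thesis unfolding fiber_eq_sign_cells[OF R] by auto
qed

lemma fiber_path_enum:
  assumes R: "R \<in> regions H0"
  shows "path_enum (region_adj Hs) {X\<in>regions Hs. rho H0 X = R} (card H1) (fiber_region R)"
proof -
  have "region_adj Hs (fiber_region R i) (fiber_region R j) \<longleftrightarrow> i = Suc j \<or> j = Suc i"
    if "i \<le> card H1" "j \<le> card H1" for i j
    using region_adj_Hs_cases[OF R fiber_point_spec(2,1)[OF R that(1)]
        R fiber_point_spec(2,1)[OF R that(2)]] fiber_point_spec(3)[OF R that(1)] fiber_point_spec(3)[OF R that(2)]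
    unfolding fiber_region_def by simp
  moreover have "inj_on (fiber_region R) {0..card H1}"
    using fiber_region_eq_iff[OF R] by (auto intro: inj_onI)
  ultimately show ?thesis
    unfolding path_enum_def bij_betw_def fiber_eq_fiber_regions[OF R] by auto
qed


lemma adjacent_fibers:
  assumes R: "R \<in> regions H0" and R': "R' \<in> regions H0" and adj: "region_adj H0 R R'"
  shows "region_adj Hs (fiber_region R 0) (fiber_region R' 0)"
    and "region_adj Hs (fiber_region R (card H1)) (fiber_region R' (card H1))"
    and "i \<le> card H1 \<Longrightarrow> j \<le> card H1 \<Longrightarrow> region_adj Hs (fiber_region R i) (fiber_region R' j) \<Longrightarrow> i = j"
proof -
  have "R \<noteq> R'" using adj not_region_adj_self[OF normals_H0] by blast
  note edge = region_adj_Hs_cases[OF R fiber_point_spec(2,1)[OF R] R' fiber_point_spec(2,1)[OF R']]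
  have "pos_side M H1 (fiber_point R 0) = {}" "pos_side M H1 (fiber_point R' 0) = {}"
    using fiber_point_spec(3)[OF R, of 0] fiber_point_spec(3)[OF R', of 0] finite_H1 pos_side_subset
    by (metis card_0_eq finite_subset zero_le)+
  then show "region_adj Hs (fiber_region R 0) (fiber_region R' 0)"
    using edge[of 0 0] \<open>R \<noteq> R'\<close> adj unfolding fiber_region_def by simp
  have "pos_side M H1 (fiber_point R (card H1)) = H1" "pos_side M H1 (fiber_point R' (card H1)) = H1"
    using fiber_point_spec(3)[OF R, of "card H1"] fiber_point_spec(3)[OF R', of "card H1"]
      finite_H1 pos_side_subset
    by (metis card_subset_eq order_refl)+
  then show "region_adj Hs (fiber_region R (card H1)) (fiber_region R' (card H1))"
    using edge[of "card H1" "card H1"] \<open>R \<noteq> R'\<close> adj unfolding fiber_region_def by simp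
  assume "i \<le> card H1" "j \<le> card H1" "region_adj Hs (fiber_region R i) (fiber_region R' j)"
  then show "i = j"
    using edge[of i j] \<open>R \<noteq> R'\<close> fiber_point_spec(3)[OF R] fiber_point_spec(3)[OF R']
    unfolding fiber_region_def by metis
qed

lemma nonadjacent_fibers:
  assumes R: "R \<in> regions H0" and R': "R' \<in> regions H0" and "R \<noteq> R'" "\<not> region_adj H0 R R'"
    and "A \<in> regions Hs" "rho H0 A = R" and "B \<in> regions Hs" "rho H0 B = R'"
  shows "\<not> region_adj Hs A B"
proof -
  have "A \<in> sign_cell M Hs ` (R - \<Union>Hs)" "B \<in> sign_cell M Hs ` (R' - \<Union>Hs)"
    using assms(5-8) fiber_eq_sign_cells[OF R] fiber_eq_sign_cells[OF R'] by blast+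
  then obtain x y where x: "x \<in> R" "x \<notin> \<Union>Hs" "A = sign_cell M Hs x"
    and y: "y \<in> R'" "y \<notin> \<Union>Hs" "B = sign_cell M Hs y" by blast
  show ?thesis
    unfolding x(3) y(3) using region_adj_Hs_cases[OF R x(1,2) R' y(1,2)] assms(3,4) by simp
qed

end

lemma modular_fibration_exists:
  assumes arr: "arrangement (H0 \<union> H1)" and disj: "H0 \<inter> H1 = {}" and modc: "modular_cond H0 H1"
    and rank: "arr_rank H0 < arr_rank (H0 \<union> H1)"
  obtains M v where "modular_fibration (H0 \<union> H1) H0 H1 M v"
proof -
  obtain N where N: "normals N (H0 \<union> H1)" using arrangement_ex_normals[OF arr] .
  obtain v where v: "v \<in> \<Inter>H0" "v \<notin> \<Union>H1" using modular_ex_direction[OF arr disj modc rank] by blast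
  define M where "M H = (if H \<in> H1 then inverse (N H \<bullet> v) *\<^sub>R N H else N H)" for H
  have Nv: "N h \<bullet> v \<noteq> 0" if "h \<in> H1" for h
    using N v(2) that unfolding normals_def by blast
  have "normals M (H0 \<union> H1)"
    using N Nv unfolding normals_def M_def by auto
  moreover have "\<forall>K\<in>H0. M K \<bullet> v = 0"
    using N v(1) disj unfolding normals_def M_def by auto
  moreover have "\<forall>h\<in>H1. M h \<bullet> v = 1"
    using Nv unfolding M_def by auto
  moreover have "finite (H0 \<union> H1)" using arr unfolding arrangement_def by blast
  ultimately have "modular_fibration (H0 \<union> H1) H0 H1 M v"
    using disj modc by unfold_locales auto
  then show ?thesis using that by blast
qed

theorem lemma2p6:
  fixes \<H> \<H>0 \<H>1 :: "'a::euclidean_space set set" and n :: nat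
  assumes "arrangement \<H>" and "supersolvable \<H>" and "arr_rank \<H> = n" and "n \<ge> 3"
    and "\<H> = \<H>0 \<union> \<H>1" and "\<H>0 \<inter> \<H>1 = {}" and "\<H>0 \<noteq> {}" and "\<H>1 \<noteq> {}"
    and "supersolvable \<H>0" and "arr_rank \<H>0 = n - 1" and "modular_cond \<H>0 \<H>1"
  shows
    "(\<forall>R\<in>regions \<H>0. \<exists>A. path_enum (region_adj \<H>) {A\<in>regions \<H>. rho \<H>0 A = R} (card \<H>1) A)
     \<and> (\<forall>R\<in>regions \<H>0. \<forall>R'\<in>regions \<H>0. region_adj \<H>0 R R' \<longrightarrow>
          (\<exists>A B. path_enum (region_adj \<H>) {X\<in>regions \<H>. rho \<H>0 X = R} (card \<H>1) A
               \<and> path_enum (region_adj \<H>) {X\<in>regions \<H>. rho \<H>0 X = R'} (card \<H>1) B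
               \<and> region_adj \<H> (A 0) (B 0)
               \<and> region_adj \<H> (A (card \<H>1)) (B (card \<H>1))
               \<and> (\<forall>i\<le>card \<H>1. \<forall>j\<le>card \<H>1. region_adj \<H> (A i) (B j) \<longrightarrow> i = j)))
     \<and> (\<forall>R\<in>regions \<H>0. \<forall>R'\<in>regions \<H>0. R \<noteq> R' \<longrightarrow> \<not> region_adj \<H>0 R R' \<longrightarrow>
          (\<forall>A\<in>regions \<H>. \<forall>B\<in>regions \<H>. rho \<H>0 A = R \<longrightarrow> rho \<H>0 B = R' \<longrightarrow>
             \<not> region_adj \<H> A B))"
proof -
  have "arr_rank \<H>0 < arr_rank (\<H>0 \<union> \<H>1)" using assms(3-5,10) by simp
  then obtain M v where "modular_fibration \<H> \<H>0 \<H>1 M v"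
    using modular_fibration_exists[of \<H>0 \<H>1] assms(1,5,6,11) by blast
  then interpret modular_fibration \<H> \<H>0 \<H>1 M v .
  show ?thesis
  proof (intro conjI ballI impI allI)
    show "\<exists>A. path_enum (region_adj \<H>) {A\<in>regions \<H>. rho \<H>0 A = R} (card \<H>1) A"
      if "R \<in> regions \<H>0" for R
      using fiber_path_enum[OF that] by blast
    show "\<exists>A B. path_enum (region_adj \<H>) {X\<in>regions \<H>. rho \<H>0 X = R} (card \<H>1) A
        \<and> path_enum (region_adj \<H>) {X\<in>regions \<H>. rho \<H>0 X = R'} (card \<H>1) B
        \<and> region_adj \<H> (A 0) (B 0) \<and> region_adj \<H> (A (card \<H>1)) (B (card \<H>1))
        \<and> (\<forall>i\<le>card \<H>1. \<forall>j\<le>card \<H>1. region_adj \<H> (A i) (B j) \<longrightarrow> i = j)"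
      if "R \<in> regions \<H>0" "R' \<in> regions \<H>0" "region_adj \<H>0 R R'" for R R'
      using fiber_path_enum[OF that(1)] fiber_path_enum[OF that(2)] adjacent_fibers[OF that]
      by (intro exI[of _ "fiber_region R"] exI[of _ "fiber_region R'"]) auto
  qed (use nonadjacent_fibers in blast)
qed

end
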